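(* For $x,y\ge 1$ with $x\ne y$ and $n>\max(x,y)$, the $(x,y)$ edge-addition process on $n$ vertices does not necessarily result in an $(x,y)$ task-dependency graph; that is, with positive probability its result is not an $(x,y)$ task-dependency graph.
   Context: A task-dependency graph is a finite directed acyclic graph (no loops, no multiple edges). A vertex is initial if it has in-degree $0$ and terminal if it has out-degree $0$ (an isolated vertex is both). An $(x,y)$ task-dependency graph has exactly $x$ initial and exactly $y$ terminal vertices. The $(x,y)$ edge-addition process on $n$ vertices: start with the empty graph on $\{1,\dots,n\}$ and repeatedly add, uniformly at random, an edge $(a,b)$ with $a<b$ not yet present; if an addition would cause fewer than $x$ initial vertices or fewer than $y$ terminal vertices, it is cancelled. The process halts if the graph after some edge addition is an $(x,y)$ task-dependency graph, or if no more edges can be added; the result is the final graph. *)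

theory Defs
  imports "HOL-Probability.Probability"
begin

text \<open>Graphs on the vertex set {1..n}; an edge (a,b) always satisfies a < b,
  so every such graph is a DAG without loops or multiple edges.\<close>

definition all_pairs :: "nat \<Rightarrow> (nat \<times> nat) set" where
  "all_pairs n = {(a, b). 1 \<le> a \<and> a < b \<and> b \<le> n}"

definition initial_vertices :: "nat \<Rightarrow> (nat \<times> nat) set \<Rightarrow> nat set" where
  "initial_vertices n E = {v \<in> {1..n}. \<not> (\<exists>u. (u, v) \<in> E)}"

definition terminal_vertices :: "nat \<Rightarrow> (nat \<times> nat) set \<Rightarrow> nat set" where
  "terminal_vertices n E = {v \<in> {1..n}. \<not> (\<exists>w. (v, w) \<in> E)}"

definition is_tdg :: "nat \<Rightarrow> nat \<Rightarrow> nat \<Rightarrow> (nat \<times> nat) set \<Rightarrow> bool" where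
  "is_tdg n x y E \<longleftrightarrow> E \<subseteq> all_pairs n \<and>
     card (initial_vertices n E) = x \<and> card (terminal_vertices n E) = y"

text \<open>Edges whose addition is not cancelled.\<close>
definition addable :: "nat \<Rightarrow> nat \<Rightarrow> nat \<Rightarrow> (nat \<times> nat) set \<Rightarrow> (nat \<times> nat) set" where
  "addable n x y E = {e \<in> all_pairs n - E.
      x \<le> card (initial_vertices n (insert e E)) \<and> y \<le> card (terminal_vertices n (insert e E))}"

lemma finite_all_pairs: "finite (all_pairs n)"
proof -
  have "all_pairs n \<subseteq> {1..n} \<times> {1..n}" by (auto simp: all_pairs_def)
  then show ?thesis by (rule finite_subset) simp
qed

lemma finite_addable: "finite (addable n x y E)"
  by (rule finite_subset[OF _ finite_all_pairs]) (auto simp: addable_def)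

function edge_process :: "nat \<Rightarrow> nat \<Rightarrow> nat \<Rightarrow> (nat \<times> nat) set \<Rightarrow> (nat \<times> nat) set pmf" where
  "edge_process n x y E =
     (if addable n x y E = {} then return_pmf E
      else pmf_of_set (addable n x y E) \<bind>
        (\<lambda>e. if is_tdg n x y (insert e E) then return_pmf (insert e E)
             else edge_process n x y (insert e E)))"
  by auto
termination
proof (relation "Wellfounded.measure (\<lambda>(n, x, y, E). card (all_pairs n - E))")
  fix n x y :: nat and E :: "(nat \<times> nat) set" and e
  assume ne: "addable n x y E \<noteq> {}" and e: "e \<in> set_pmf (pmf_of_set (addable n x y E))"
  then have "e \<in> addable n x y E" using finite_addable by simp
  then have "e \<in> all_pairs n - E" by (simp add: addable_def)
  then have "all_pairs n - insert e E \<subset> all_pairs n - E" by auto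
  then have "card (all_pairs n - insert e E) < card (all_pairs n - E)"
    by (rule psubset_card_mono[rotated]) (simp add: finite_all_pairs)
  then show "((n, x, y, insert e E), n, x, y, E) \<in> Wellfounded.measure (\<lambda>(n, x, y, E). card (all_pairs n - E))"
    by simp
qed auto

end

theory Submission
  imports Defs
begin

text \<open>Let \<open>x < y < n\<close>. If the process happens to add exactly the edges among the vertices
  \<open>y, \<dots>, n\<close> (in any order), every intermediate graph has at least \<open>y\<close> initial vertices
  \<open>1, \<dots>, y\<close> and at least \<open>y\<close> terminal vertices \<open>1, \<dots>, y - 1, n\<close>, so no addition is
  cancelled and, having \<open>y > x\<close> initial vertices, none of them is an \<open>(x, y)\<close> graph.
  Every further edge starts at some \<open>a < y\<close> and would leave only \<open>y - 1\<close> terminal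
  vertices, so the process halts in this graph, which is reached with positive probability.
  The case \<open>x > y\<close> follows by reversing the order of the vertices, which exchanges
  initial and terminal vertices.\<close>

text \<open>From any subgraph of a dead end the process can add its remaining edges one by one
  and then halts in it, never having produced an \<open>(x, y)\<close> graph.\<close>

definition dead_end :: "nat \<Rightarrow> nat \<Rightarrow> nat \<Rightarrow> (nat \<times> nat) set \<Rightarrow> bool" where
  "dead_end n x y F \<longleftrightarrow> F \<subseteq> all_pairs n \<and> addable n x y F = {} \<and>
     (\<forall>S \<subseteq> F. \<not> is_tdg n x y S \<and> F - S \<subseteq> addable n x y S)"

lemma dead_end_in_set_edge_process:
  assumes dead_end: "dead_end n x y F" and "S \<subseteq> F"
  shows "F \<in> set_pmf (edge_process n x y S)"
  using \<open>S \<subseteq> F\<close>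
proof (induction "card (F - S)" arbitrary: S rule: less_induct)
  case less
  have "finite F"
    using dead_end finite_all_pairs finite_subset by (auto simp: dead_end_def)
  show ?case
  proof (cases "S = F")
    case True
    with dead_end show ?thesis
      by (subst edge_process.simps) (simp add: dead_end_def del: edge_process.simps)
  next
    case False
    then obtain e where e: "e \<in> F - S"
      using less.prems by blast
    with dead_end less.prems have e_addable: "e \<in> addable n x y S"
      unfolding dead_end_def by blast
    have sub: "insert e S \<subseteq> F"
      using e less.prems by blast
    have "card (F - insert e S) < card (F - S)"
      using e \<open>finite F\<close> by (intro psubset_card_mono) auto
    with sub have "F \<in> set_pmf (edge_process n x y (insert e S))"
      using less.hyps by blast
    moreover have "\<not> is_tdg n x y (insert e S)"
      using dead_end sub by (simp add: dead_end_def)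
    ultimately show ?thesis
      using e_addable finite_addable[of n x y S]
      by (subst edge_process.simps) (auto simp del: edge_process.simps)
  qed
qed

lemma dead_end_prob_not_tdg_pos:
  assumes "dead_end n x y F"
  shows "measure_pmf.prob (edge_process n x y {}) {E. \<not> is_tdg n x y E} > 0"
proof (rule measure_pmf_posI)
  show "F \<in> set_pmf (edge_process n x y {})"
    using assms by (rule dead_end_in_set_edge_process) simp
  show "F \<in> {E. \<not> is_tdg n x y E}"
    using assms by (simp add: dead_end_def)
qed

lemma finite_initial_vertices: "finite (initial_vertices n E)"
  by (rule finite_subset[of _ "{1..n}"]) (auto simp: initial_vertices_def)

lemma finite_terminal_vertices: "finite (terminal_vertices n E)"
  by (rule finite_subset[of _ "{1..n}"]) (auto simp: terminal_vertices_def)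

lemma dead_end_clique:
  assumes "x < y" and "y < n"
  shows "dead_end n x y {(a, b). y \<le> a \<and> a < b \<and> b \<le> n}"
    (is "dead_end n x y ?F")
proof -
  have F_sub: "?F \<subseteq> all_pairs n"
    using assms by (auto simp: all_pairs_def)
  have many_initial: "y \<le> card (initial_vertices n S)" if "S \<subseteq> ?F" for S
  proof -
    have "{1..y} \<subseteq> initial_vertices n S"
      using that assms by (auto simp: initial_vertices_def)
    then have "card {1..y} \<le> card (initial_vertices n S)"
      by (rule card_mono[rotated]) (rule finite_initial_vertices)
    then show ?thesis
      by simp
  qed
  have many_terminal: "y \<le> card (terminal_vertices n S)" if "S \<subseteq> ?F" for S
  proof -
    have "insert n {1..<y} \<subseteq> terminal_vertices n S"
      using that assms unfolding terminal_vertices_def by fastforce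
    then have "card (insert n {1..<y}) \<le> card (terminal_vertices n S)"
      by (rule card_mono[rotated]) (rule finite_terminal_vertices)
    moreover have "card (insert n {1..<y}) = y"
      using assms by simp
    ultimately show ?thesis
      by simp
  qed
  have "addable n x y ?F = {}"
  proof (rule ccontr)
    assume "addable n x y ?F \<noteq> {}"
    then obtain a b where ab: "(a, b) \<in> all_pairs n - ?F"
      and terminal: "y \<le> card (terminal_vertices n (insert (a, b) ?F))"
      by (auto simp: addable_def)
    then have "1 \<le> a" "a < y"
      by (auto simp: all_pairs_def)
    have "terminal_vertices n (insert (a, b) ?F) \<subseteq> insert n ({1..<y} - {a})"
    proof
      fix v
      assume v: "v \<in> terminal_vertices n (insert (a, b) ?F)"
      then have "v \<noteq> a" "1 \<le> v" "v \<le> n"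
        by (auto simp: terminal_vertices_def)
      moreover have "(v, n) \<notin> ?F"
        using v by (auto simp: terminal_vertices_def)
      ultimately show "v \<in> insert n ({1..<y} - {a})"
        by auto
    qed
    then have "card (terminal_vertices n (insert (a, b) ?F)) \<le> card (insert n ({1..<y} - {a}))"
      by (intro card_mono) auto
    also have "\<dots> \<le> Suc (card ({1..<y} - {a}))"
      by (rule card_insert_le_m1) auto
    also have "\<dots> = y - 1"
      using \<open>1 \<le> a\<close> \<open>a < y\<close> by simp
    finally show False
      using terminal \<open>a < y\<close> by simp
  qed
  moreover have "\<not> is_tdg n x y S" if "S \<subseteq> ?F" for S
    using many_initial[OF that] assms by (simp add: is_tdg_def)
  moreover have "?F - S \<subseteq> addable n x y S" if "S \<subseteq> ?F" for S
  proof
    fix e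
    assume "e \<in> ?F - S"
    then have "insert e S \<subseteq> ?F"
      using that by blast
    then have "x \<le> card (initial_vertices n (insert e S))"
      and "y \<le> card (terminal_vertices n (insert e S))"
      using many_initial many_terminal \<open>x < y\<close> by (meson less_imp_le order_trans)+
    then show "e \<in> addable n x y S"
      using \<open>e \<in> ?F - S\<close> F_sub by (auto simp: addable_def)
  qed
  ultimately show ?thesis
    using F_sub by (simp add: dead_end_def)
qed

definition reverse_edge :: "nat \<Rightarrow> nat \<times> nat \<Rightarrow> nat \<times> nat" where
  "reverse_edge n = (\<lambda>(a, b). (Suc n - b, Suc n - a))"

lemma reverse_edge_in_all_pairs: "e \<in> all_pairs n \<Longrightarrow> reverse_edge n e \<in> all_pairs n"
  by (auto simp: reverse_edge_def all_pairs_def)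

lemma reverse_edge_reverse_edge: "e \<in> all_pairs n \<Longrightarrow> reverse_edge n (reverse_edge n e) = e"
  by (auto simp: reverse_edge_def all_pairs_def)

lemma inj_on_reverse_edge: "inj_on (reverse_edge n) (all_pairs n)"
  by (metis inj_on_inverseI reverse_edge_reverse_edge)

lemma image_reverse_edge_image_reverse_edge:
  "E \<subseteq> all_pairs n \<Longrightarrow> reverse_edge n ` reverse_edge n ` E = E"
  by (force simp: image_image reverse_edge_reverse_edge subsetD)

lemma initial_vertices_reverse_edge:
  assumes "E \<subseteq> all_pairs n"
  shows "initial_vertices n (reverse_edge n ` E) = (\<lambda>v. Suc n - v) ` terminal_vertices n E"
proof (intro equalityI subsetI)
  fix v
  assume v: "v \<in> initial_vertices n (reverse_edge n ` E)"
  have "Suc n - v \<in> terminal_vertices n E"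
  proof -
    have "(Suc n - v, w) \<notin> E" for w
      using v by (force simp: initial_vertices_def reverse_edge_def)
    then show ?thesis
      using v by (auto simp: terminal_vertices_def initial_vertices_def)
  qed
  moreover have "v = Suc n - (Suc n - v)"
    using v by (simp add: initial_vertices_def)
  ultimately show "v \<in> (\<lambda>v. Suc n - v) ` terminal_vertices n E"
    by blast
next
  fix v
  assume "v \<in> (\<lambda>v. Suc n - v) ` terminal_vertices n E"
  then obtain w where v: "v = Suc n - w" and w: "w \<in> terminal_vertices n E"
    by blast
  have "(u, v) \<notin> reverse_edge n ` E" for u
  proof
    assume "(u, v) \<in> reverse_edge n ` E"
    then obtain a b where "(a, b) \<in> E" and "v = Suc n - a"
      by (auto simp: reverse_edge_def)
    moreover have "a \<le> n"
      using \<open>(a, b) \<in> E\<close> assms by (auto simp: all_pairs_def)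
    moreover have "w \<le> n"
      using w by (simp add: terminal_vertices_def)
    ultimately have "a = w"
      using v by linarith
    then have "(w, b) \<in> E"
      using \<open>(a, b) \<in> E\<close> by simp
    then show False
      using w by (auto simp: terminal_vertices_def)
  qed
  then show "v \<in> initial_vertices n (reverse_edge n ` E)"
    using v w by (auto simp: initial_vertices_def terminal_vertices_def)
qed

lemma card_initial_vertices_reverse_edge:
  assumes "E \<subseteq> all_pairs n"
  shows "card (initial_vertices n (reverse_edge n ` E)) = card (terminal_vertices n E)"
proof -
  have "inj_on (\<lambda>v. Suc n - v) (terminal_vertices n E)"
    by (auto simp: inj_on_def terminal_vertices_def)
  then show ?thesis
    using assms by (simp add: initial_vertices_reverse_edge card_image)
qed

lemma card_terminal_vertices_reverse_edge:
  assumes "E \<subseteq> all_pairs n"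
  shows "card (terminal_vertices n (reverse_edge n ` E)) = card (initial_vertices n E)"
proof -
  have "reverse_edge n ` E \<subseteq> all_pairs n"
    using assms reverse_edge_in_all_pairs by blast
  then show ?thesis
    using card_initial_vertices_reverse_edge[of "reverse_edge n ` E" n] assms
    by (simp add: image_reverse_edge_image_reverse_edge)
qed

lemma is_tdg_reverse_edge:
  assumes "E \<subseteq> all_pairs n"
  shows "is_tdg n y x (reverse_edge n ` E) \<longleftrightarrow> is_tdg n x y E"
  using assms reverse_edge_in_all_pairs
  by (auto simp: is_tdg_def card_initial_vertices_reverse_edge card_terminal_vertices_reverse_edge)

lemma addable_reverse_edge:
  assumes S: "S \<subseteq> all_pairs n"
  shows "addable n y x (reverse_edge n ` S) = reverse_edge n ` addable n x y S"
proof -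
  have addable_iff: "reverse_edge n e \<in> addable n y x (reverse_edge n ` S) \<longleftrightarrow> e \<in> addable n x y S"
    if e: "e \<in> all_pairs n" for e
  proof -
    have eS: "insert e S \<subseteq> all_pairs n"
      using e S by blast
    have "card (initial_vertices n (insert (reverse_edge n e) (reverse_edge n ` S)))
        = card (terminal_vertices n (insert e S))"
      using card_initial_vertices_reverse_edge[OF eS] by simp
    moreover have "card (terminal_vertices n (insert (reverse_edge n e) (reverse_edge n ` S)))
        = card (initial_vertices n (insert e S))"
      using card_terminal_vertices_reverse_edge[OF eS] by simp
    moreover have "reverse_edge n e \<in> reverse_edge n ` S \<longleftrightarrow> e \<in> S"
      using inj_on_reverse_edge e S by (rule inj_on_image_mem_iff)
    ultimately show ?thesis
      using e reverse_edge_in_all_pairs by (auto simp: addable_def)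
  qed
  show ?thesis
  proof (intro equalityI subsetI)
    fix e'
    assume e': "e' \<in> addable n y x (reverse_edge n ` S)"
    then have "e' \<in> all_pairs n"
      by (simp add: addable_def)
    then show "e' \<in> reverse_edge n ` addable n x y S"
      using addable_iff e' reverse_edge_in_all_pairs reverse_edge_reverse_edge by (metis image_eqI)
  next
    fix e'
    assume "e' \<in> reverse_edge n ` addable n x y S"
    then obtain e where "e \<in> addable n x y S" and "e' = reverse_edge n e"
      by blast
    then show "e' \<in> addable n y x (reverse_edge n ` S)"
      using addable_iff by (simp add: addable_def)
  qed
qed

lemma dead_end_reverse_edge:
  assumes dead_end: "dead_end n x y F"
  shows "dead_end n y x (reverse_edge n ` F)"
proof -
  have F: "F \<subseteq> all_pairs n"
    using dead_end by (simp add: dead_end_def)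
  have "\<not> is_tdg n y x S' \<and> reverse_edge n ` F - S' \<subseteq> addable n y x S'"
    if S'_sub: "S' \<subseteq> reverse_edge n ` F" for S'
  proof -
    obtain S where "S \<subseteq> F" and S': "S' = reverse_edge n ` S"
      using S'_sub by (rule subset_imageE)
    have S: "S \<subseteq> all_pairs n"
      using \<open>S \<subseteq> F\<close> F by blast
    have "reverse_edge n ` F - S' = reverse_edge n ` (F - S)"
      using inj_on_image_set_diff[OF inj_on_reverse_edge] F S S' by blast
    also have "\<dots> \<subseteq> reverse_edge n ` addable n x y S"
      using dead_end \<open>S \<subseteq> F\<close> unfolding dead_end_def by blast
    also have "\<dots> = addable n y x S'"
      using addable_reverse_edge[OF S] S' by simp
    finally show ?thesis
      using is_tdg_reverse_edge[OF S] dead_end \<open>S \<subseteq> F\<close> S' unfolding dead_end_def by blast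
  qed
  moreover have "reverse_edge n ` F \<subseteq> all_pairs n"
    using F reverse_edge_in_all_pairs by blast
  moreover have "addable n y x (reverse_edge n ` F) = {}"
    using addable_reverse_edge[OF F] dead_end by (simp add: dead_end_def)
  ultimately show ?thesis
    by (simp add: dead_end_def)
qed

theorem mainTheorem9:
  fixes n x y :: nat
  assumes "1 \<le> x" and "1 \<le> y" and "x \<noteq> y" and "max x y < n"
  shows "measure_pmf.prob (edge_process n x y {}) {E. \<not> is_tdg n x y E} > 0"
proof (cases "x < y")
  case True
  with assms have "dead_end n x y {(a, b). y \<le> a \<and> a < b \<and> b \<le> n}"
    by (intro dead_end_clique) auto
  then show ?thesis
    by (rule dead_end_prob_not_tdg_pos)
next
  case False
  with assms have "dead_end n y x {(a, b). x \<le> a \<and> a < b \<and> b \<le> n}"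
    by (intro dead_end_clique) auto
  then have "dead_end n x y (reverse_edge n ` {(a, b). x \<le> a \<and> a < b \<and> b \<le> n})"
    by (rule dead_end_reverse_edge)
  then show ?thesis
    by (rule dead_end_prob_not_tdg_pos)
qed

end
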